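(* Let $N_{\mathrm{PA}}<N$ and let $f:\mathrm{GF}(2)^N\to\mathrm{GF}(2)^{N_{\mathrm{PA}}}$ be an additive map (i.e. $f(\vec a)=A\vec a$ for an $N_{\mathrm{PA}}\times N$ matrix $A$ over $\mathrm{GF}(2)$) whose matrix $A$ has linearly independent rows, so that $f$ is surjective. Let $\vec a$ be a random $N$-bit string and $E$ a quantum system held by an eavesdropper, with joint classical-quantum state $\rho_{\vec a E}$, and suppose the key $K=f(\vec a)$ is $\epsilon$-secure with respect to $E$, i.e. $\frac12\operatorname{Tr}|\rho_{KE}-\rho_U\otimes\rho_E|\le\epsilon$ where $\rho_U$ is the uniform distribution on $\{0,1\}^{N_{\mathrm{PA}}}$. Let $\vec m'$ be an $N_{\mathrm{PA}}$-bit message, distributed arbitrarily but independently of $(\vec a,E)$, and let $\vec m$ be chosen, given $\vec m'$, uniformly at random (with fresh randomness independent of everything else) from the set $f^{-1}[\vec m']=\{\vec m\in\mathrm{GF}(2)^N: f(\vec m)=\vec m'\}$. Let $S=\vec a\oplus\vec m$ be the string observed by the eavesdropper. Then the message $\vec m'$ is $\epsilon$-secure against an eavesdropper holding $E$ and $S$, in the sense that $$\tfrac12\operatorname{Tr}\big|\rho_{M'SE}-\rho_{M'}\otimes\tau_N\otimes\rho_E\big|\le\epsilon,$$ where $\rho_{M'SE}$ is the joint classical-quantum state of $\vec m'$, $S$ and $E$, $\rho_{M'}$ is the state of $\vec m'$, and $\tau_N$ is the uniform distribution on $\{0,1\}^N$. (This is exactly the security level obtained when, instead, $\vec m'$ is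 one-time-pad encrypted with the key $f(\vec a)$ and the eavesdropper sees $f(\vec a)\oplus\vec m'$.) *)

theory Defs
  imports "Jordan_Normal_Form.Schur_Decomposition" "Jordan_Normal_Form.Char_Poly" "HOL-Library.Z2"
begin

text \<open>Classical bit strings of length n are vectors in carrier_vec n over the field GF(2)
  (type bit); addition of such vectors is bitwise XOR.\<close>

definition mtrace :: "complex mat \<Rightarrow> complex" where
  "mtrace A = (\<Sum>i<dim_row A. A $$ (i,i))"

definition psd :: "nat \<Rightarrow> complex mat \<Rightarrow> bool" where
  "psd d A \<longleftrightarrow> A \<in> carrier_mat d d \<and> mat_adjoint A = A \<and>
     (\<forall>v \<in> carrier_vec d. 0 \<le> Re (scalar_prod (conjugate v) (A *\<^sub>v v)))"

text \<open>Trace norm Tr|X| of a Hermitian matrix X: the sum of the absolute values of its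
  eigenvalues, counted with (algebraic) multiplicity.\<close>
definition trace_norm :: "complex mat \<Rightarrow> real" where
  "trace_norm X = (\<Sum>z\<in>{z. poly (char_poly X) z = 0}. real (order z (char_poly X)) * cmod z)"

definition msum :: "nat \<Rightarrow> ('x \<Rightarrow> complex mat) \<Rightarrow> 'x set \<Rightarrow> complex mat" where
  "msum d f S = mat d d (\<lambda>ij. \<Sum>x\<in>S. f x $$ ij)"

text \<open>A classical-quantum state on classical alphabet X and quantum dimension d,
  rho_XE = sum_x |x><x| (tensor) rho x, is represented by its block family x \<mapsto> rho x
  (subnormalised: rho x = Pr[x] * rho_E^x).\<close>
definition cq_state :: "nat \<Rightarrow> 'x set \<Rightarrow> ('x \<Rightarrow> complex mat) \<Rightarrow> bool" where
  "cq_state d X \<rho> \<longleftrightarrow> (\<forall>x\<in>X. psd d (\<rho> x)) \<and> (\<Sum>x\<in>X. mtrace (\<rho> x)) = 1"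

text \<open>(1/2) Tr |rho_XE - sigma_XE| for two cq states with the same classical register X
  (the difference is block diagonal, so the trace norm is the sum of the blocks' trace norms).\<close>
definition cq_trace_dist :: "'x set \<Rightarrow> ('x \<Rightarrow> complex mat) \<Rightarrow> ('x \<Rightarrow> complex mat) \<Rightarrow> real" where
  "cq_trace_dist X \<rho> \<sigma> = (1/2) * (\<Sum>x\<in>X. trace_norm (\<rho> x - \<sigma> x))"

definition marg_E :: "nat \<Rightarrow> 'x set \<Rightarrow> ('x \<Rightarrow> complex mat) \<Rightarrow> complex mat" where
  "marg_E d X \<rho> = msum d \<rho> X"

definition fiber :: "nat \<Rightarrow> bit mat \<Rightarrow> bit vec \<Rightarrow> bit vec set" where
  "fiber N A k = {a \<in> carrier_vec N. A *\<^sub>v a = k}"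

definition key_state :: "nat \<Rightarrow> nat \<Rightarrow> bit mat \<Rightarrow> (bit vec \<Rightarrow> complex mat) \<Rightarrow> bit vec \<Rightarrow> complex mat" where
  "key_state d N A \<rho> k = msum d \<rho> (fiber N A k)"

text \<open>State rho_{M'SE}: m' ~ p, m uniform on f^{-1}[m'] (fresh randomness), S = a + m,
  hence a = S + m over GF(2).\<close>
definition msg_state :: "nat \<Rightarrow> nat \<Rightarrow> bit mat \<Rightarrow> (bit vec \<Rightarrow> real) \<Rightarrow> (bit vec \<Rightarrow> complex mat)
    \<Rightarrow> bit vec \<times> bit vec \<Rightarrow> complex mat" where
  "msg_state d N A p \<rho> ms = (case ms of (m', s) \<Rightarrow>
     msum d (\<lambda>m. complex_of_real (p m' / real (card (fiber N A m'))) \<cdot>\<^sub>m \<rho> (s + m)) (fiber N A m'))"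

end

theory Submission
  imports Defs "Berlekamp_Zassenhaus.Berlekamp_Type_Based"
    "Jordan_Normal_Form.Jordan_Normal_Form_Existence"
begin

text \<open>Since S = a + m with m uniform on the fibre of m', the block of rho_M'SE at (m', s) is
  p(m') / |f^-1[m']| times the block of rho_KE at the key k = A s + m'. As f is surjective, all
  fibres have 2^N / 2^N_PA elements, so for fixed m' the map s \<mapsto> A s + m' hits every key equally
  often. Summing the trace norms of the blocks therefore gives p(m') times the key distance for
  every m', and the weights p(m') sum to 1. The fibre size itself is computed by character sums
  over GF(2): independence of the rows of A means that only the trivial character survives.\<close>

lemma UNIV_bit: "(UNIV :: bit set) = {0, 1}"
  by (auto intro: bit.exhaust)

instance bit :: finite
  by standard (simp add: UNIV_bit)

lemma card_carrier_vec_bit: "card (carrier_vec n :: bit vec set) = 2 ^ n"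
  by (simp add: card_carrier_vec UNIV_bit numeral_2_eq_2)

lemma bit_vec_add_self [simp]: "(a :: bit vec) \<in> carrier_vec n \<Longrightarrow> a + a = 0\<^sub>v n"
  by (intro eq_vecI) auto

lemma bit_vec_add_cancel_left [simp]:
  "(s :: bit vec) \<in> carrier_vec n \<Longrightarrow> x \<in> carrier_vec n \<Longrightarrow> s + (s + x) = x"
  by (simp add: assoc_add_vec[symmetric])

lemma bit_vec_add_eq_0_iff:
  "(x :: bit vec) \<in> carrier_vec n \<Longrightarrow> k \<in> carrier_vec n \<Longrightarrow> x + k = 0\<^sub>v n \<longleftrightarrow> x = k"
  by (metis bit_vec_add_self comm_add_vec bit_vec_add_cancel_left right_zero_vec)

lemma bij_betw_bit_vec_translate:
  assumes "(s :: bit vec) \<in> carrier_vec n" "X \<subseteq> carrier_vec n" "Y \<subseteq> carrier_vec n"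
    and "\<And>x. x \<in> X \<Longrightarrow> s + x \<in> Y" "\<And>y. y \<in> Y \<Longrightarrow> s + y \<in> X"
  shows "bij_betw (\<lambda>x. s + x) X Y"
  by (rule bij_betwI[of _ _ _ "\<lambda>x. s + x"]) (use assms in auto)

definition bit_character :: "bit \<Rightarrow> real" where
  "bit_character b = (if b = 0 then 1 else -1)"

lemma bit_character_0 [simp]: "bit_character 0 = 1"
  and bit_character_1 [simp]: "bit_character 1 = -1"
  by (simp_all add: bit_character_def)

lemma bit_character_add: "bit_character (x + y) = bit_character x * bit_character y"
  by (cases x; cases y) (auto simp: bit_character_def)

lemma sum_bit_character_scalar_prod:
  assumes w: "(w :: bit vec) \<in> carrier_vec n"
  shows "(\<Sum>a\<in>carrier_vec n. bit_character (w \<bullet> a)) = (if w = 0\<^sub>v n then 2 ^ n else 0)"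
proof (cases "w = 0\<^sub>v n")
  case True
  then show ?thesis by (simp add: card_carrier_vec_bit)
next
  case False
  then obtain i where i: "i < n" "w $ i = 1"
    using w by (metis eq_vecI carrier_vecD index_zero_vec bit_not_zero_iff)
  define e :: "bit vec" where "e = unit_vec n i"
  have e: "e \<in> carrier_vec n" and we: "w \<bullet> e = 1"
    unfolding e_def using w i by (simp_all add: scalar_prod_right_unit)
  have bij: "bij_betw (\<lambda>a. e + a) (carrier_vec n) (carrier_vec n)"
    by (rule bij_betw_bit_vec_translate) (use e in auto)
  \<comment> \<open>translating by e flips the sign of every summand\<close>
  have "(\<Sum>a\<in>carrier_vec n. bit_character (w \<bullet> a))
      = (\<Sum>a\<in>carrier_vec n. bit_character (w \<bullet> (e + a)))"
    using sum.reindex_bij_betw[OF bij, of "\<lambda>a. bit_character (w \<bullet> a)"] by simp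
  also have "\<dots> = (\<Sum>a\<in>carrier_vec n. - bit_character (w \<bullet> a))"
    by (intro sum.cong refl)
      (simp only: scalar_prod_add_distrib[OF w e] we bit_character_add bit_character_1)
  also have "\<dots> = - (\<Sum>a\<in>carrier_vec n. bit_character (w \<bullet> a))"
    by (simp add: sum_negf)
  finally show ?thesis using False by simp
qed

lemma card_fiber:
  assumes A: "A \<in> carrier_mat P N"
    and rows_indep: "\<forall>y \<in> carrier_vec P. transpose_mat A *\<^sub>v y = 0\<^sub>v N \<longrightarrow> y = 0\<^sub>v P"
    and k: "k \<in> carrier_vec P"
  shows "card (fiber N A k) * 2 ^ P = 2 ^ N"
proof -
  let ?\<chi> = bit_character
  have character_sum: "(\<Sum>y\<in>carrier_vec P. ?\<chi> (y \<bullet> z)) = (if z = 0\<^sub>v P then 2 ^ P else 0)"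
    if z: "z \<in> carrier_vec P" for z
    using sum_bit_character_scalar_prod[OF z] by (simp add: comm_scalar_prod[OF _ z] cong: sum.cong)
  have transpose_zero_iff: "transpose_mat A *\<^sub>v y = 0\<^sub>v N \<longleftrightarrow> y = 0\<^sub>v P"
    if "y \<in> carrier_vec P" for y
    using rows_indep that A by auto
  have "real (card (fiber N A k)) * 2 ^ P
      = (\<Sum>a\<in>carrier_vec N. if A *\<^sub>v a + k = 0\<^sub>v P then 2 ^ P else 0)"
    using A k by (simp add: fiber_def sum.If_cases Int_def bit_vec_add_eq_0_iff)
  also have "\<dots> = (\<Sum>a\<in>carrier_vec N. \<Sum>y\<in>carrier_vec P. ?\<chi> (y \<bullet> (A *\<^sub>v a + k)))"
    using A k by (intro sum.cong refl) (simp add: character_sum)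
  also have "\<dots> = (\<Sum>a\<in>carrier_vec N. \<Sum>y\<in>carrier_vec P. ?\<chi> (y \<bullet> k) * ?\<chi> ((transpose_mat A *\<^sub>v y) \<bullet> a))"
  proof (intro sum.cong refl)
    fix a y :: "bit vec" assume a: "a \<in> carrier_vec N" and y: "y \<in> carrier_vec P"
    have Aa: "A *\<^sub>v a \<in> carrier_vec P" using A a by simp
    show "?\<chi> (y \<bullet> (A *\<^sub>v a + k)) = ?\<chi> (y \<bullet> k) * ?\<chi> ((transpose_mat A *\<^sub>v y) \<bullet> a)"
      unfolding scalar_prod_add_distrib[OF y Aa k] bit_character_add transpose_vec_mult_scalar[OF A a y]
      by (rule mult.commute)
  qed
  also have "\<dots> = (\<Sum>y\<in>carrier_vec P. ?\<chi> (y \<bullet> k) * (\<Sum>a\<in>carrier_vec N. ?\<chi> ((transpose_mat A *\<^sub>v y) \<bullet> a)))"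
    by (subst sum.swap) (simp add: sum_distrib_left)
  also have "\<dots> = (\<Sum>y :: bit vec \<in> carrier_vec P. if y = 0\<^sub>v P then 2 ^ N else 0)"
  proof (intro sum.cong refl)
    fix y :: "bit vec" assume y: "y \<in> carrier_vec P"
    have "transpose_mat A *\<^sub>v y \<in> carrier_vec N" using A y by simp
    then show "?\<chi> (y \<bullet> k) * (\<Sum>a\<in>carrier_vec N. ?\<chi> ((transpose_mat A *\<^sub>v y) \<bullet> a))
        = (if y = 0\<^sub>v P then 2 ^ N else 0)"
      using k by (simp add: sum_bit_character_scalar_prod transpose_zero_iff[OF y] scalar_prod_left_zero)
  qed
  also have "\<dots> = 2 ^ N" by (simp add: sum.delta)
  finally have "real (card (fiber N A k) * 2 ^ P) = real (2 ^ N)" by simp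
  then show ?thesis by (simp only: of_nat_eq_iff)
qed

lemma real_card_fiber:
  assumes "A \<in> carrier_mat P N"
    and "\<forall>y \<in> carrier_vec P. transpose_mat A *\<^sub>v y = 0\<^sub>v N \<longrightarrow> y = 0\<^sub>v P"
    and "k \<in> carrier_vec P"
  shows "real (card (fiber N A k)) = 2 ^ N / 2 ^ P"
proof -
  have "real (card (fiber N A k)) * 2 ^ P = 2 ^ N"
    using card_fiber[OF assms] by (metis of_nat_mult of_nat_numeral of_nat_power)
  then show ?thesis by (simp add: field_simps)
qed

lemma bij_betw_fiber_translate:
  assumes A: "A \<in> carrier_mat P N" and s: "s \<in> carrier_vec N" and k: "k \<in> carrier_vec P"
  shows "bij_betw (\<lambda>m. s + m) (fiber N A k) (fiber N A (A *\<^sub>v s + k))"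
proof (rule bij_betw_bit_vec_translate[OF s])
  show "s + m \<in> fiber N A (A *\<^sub>v s + k)" if "m \<in> fiber N A k" for m
    using that A s by (auto simp: fiber_def mult_add_distrib_mat_vec)
  show "s + m \<in> fiber N A k" if "m \<in> fiber N A (A *\<^sub>v s + k)" for m
    using that A s k by (auto simp: fiber_def mult_add_distrib_mat_vec)
qed (auto simp: fiber_def)

lemma sum_mult_mat_vec_shift:
  fixes g :: "bit vec \<Rightarrow> real"
  assumes A: "A \<in> carrier_mat P N"
    and rows_indep: "\<forall>y \<in> carrier_vec P. transpose_mat A *\<^sub>v y = 0\<^sub>v N \<longrightarrow> y = 0\<^sub>v P"
    and m: "m \<in> carrier_vec P"
  shows "(\<Sum>s\<in>carrier_vec N. g (A *\<^sub>v s + m)) = 2 ^ N / 2 ^ P * (\<Sum>k\<in>carrier_vec P. g k)"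
proof -
  have "(\<Sum>s\<in>carrier_vec N. g (A *\<^sub>v s + m))
      = (\<Sum>k\<in>carrier_vec P. \<Sum>s\<in>fiber N A k. g (A *\<^sub>v s + m))"
    unfolding fiber_def by (rule sum.group[symmetric]) (use A in auto)
  also have "\<dots> = (\<Sum>k\<in>carrier_vec P. 2 ^ N / 2 ^ P * g (k + m))"
    using real_card_fiber[OF A rows_indep] by (intro sum.cong refl) (simp add: fiber_def)
  also have "\<dots> = 2 ^ N / 2 ^ P * (\<Sum>k\<in>carrier_vec P. g (k + m))"
    by (simp only: sum_distrib_left)
  also have "(\<Sum>k\<in>carrier_vec P. g (k + m)) = (\<Sum>k\<in>carrier_vec P. g k)"
    using m sum.reindex_bij_betw[OF bij_betw_bit_vec_translate[OF m], of "carrier_vec P" "carrier_vec P" g]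
    by (simp add: comm_add_vec[of m])
  finally show ?thesis .
qed

lemma trace_norm_zero_mat: "trace_norm (0\<^sub>m d d) = 0"
proof -
  have "map (\<lambda>i. 0\<^sub>m d d $$ (i, i)) [0..<d] = replicate d (0::complex)"
    by (simp add: list_eq_iff_nth_eq)
  then have "char_poly (0\<^sub>m d d :: complex mat) = [:0, 1:] ^ d"
    by (subst char_poly_upper_triangular[of _ d]) (auto simp: diag_mat_def)
  then show ?thesis unfolding trace_norm_def by (intro sum.neutral) auto
qed

lemma trace_norm_smult:
  assumes X: "X \<in> carrier_mat d d" and c: "c \<ge> 0"
  shows "trace_norm (complex_of_real c \<cdot>\<^sub>m X) = c * trace_norm X"
proof (cases "c = 0")
  case True
  have "complex_of_real c \<cdot>\<^sub>m X = 0\<^sub>m d d" using X True by (intro eq_matI) auto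
  then show ?thesis using True trace_norm_zero_mat by simp
next
  case False
  define k where "k = complex_of_real c"
  have k: "k \<noteq> 0" and ck: "cmod k = c" using False c k_def by simp_all
  have char_poly_nz: "char_poly Y \<noteq> 0" if "Y \<in> carrier_mat d d" for Y :: "complex mat"
    using degree_monic_char_poly[OF that] by auto
  have ord: "order z (char_poly (k \<cdot>\<^sub>m X)) = order (z / k) (char_poly X)" for z
    by (rule order_char_poly_smult[OF X k])
  have roots: "{z. poly (char_poly (k \<cdot>\<^sub>m X)) z = 0} = (\<lambda>w. k * w) ` {w. poly (char_poly X) w = 0}"
  proof -
    have "{z. poly (char_poly (k \<cdot>\<^sub>m X)) z = 0} = {z. order (z / k) (char_poly X) \<noteq> 0}"
      unfolding order_root[of "char_poly (k \<cdot>\<^sub>m X)"] ord using char_poly_nz[of "k \<cdot>\<^sub>m X"] X by simp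
    also have "\<dots> = (\<lambda>w. k * w) ` {w. order w (char_poly X) \<noteq> 0}"
      using k by (auto intro: image_eqI[of _ _ "_ / k"])
    also have "{w. order w (char_poly X) \<noteq> 0} = {w. poly (char_poly X) w = 0}"
      using order_root char_poly_nz[OF X] by auto
    finally show ?thesis .
  qed
  have inj: "inj_on (\<lambda>w. k * w) {w. poly (char_poly X) w = 0}" using k by (auto intro: inj_onI)
  have "trace_norm (k \<cdot>\<^sub>m X) = (\<Sum>w\<in>{w. poly (char_poly X) w = 0}. c * (real (order w (char_poly X)) * cmod w))"
    unfolding trace_norm_def roots sum.reindex[OF inj] by (simp add: ord k norm_mult ck mult_ac)
  then show ?thesis unfolding k_def trace_norm_def by (simp add: sum_distrib_left)
qed

lemma msum_smult:
  assumes "\<And>x. x \<in> S \<Longrightarrow> f x \<in> carrier_mat d d"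
  shows "msum d (\<lambda>x. c \<cdot>\<^sub>m f x) S = c \<cdot>\<^sub>m msum d f S"
proof -
  have "(c \<cdot>\<^sub>m f x) $$ (i, j) = c * f x $$ (i, j)" if "x \<in> S" "i < d" "j < d" for x i j
    using assms that by (metis carrier_matD index_smult_mat(1))
  then show ?thesis
    unfolding msum_def by (intro eq_matI) (auto simp: sum_distrib_left intro!: sum.cong)
qed

lemma msum_reindex_bij_betw:
  assumes "bij_betw h S T"
  shows "msum d (\<lambda>x. f (h x)) S = msum d f T"
  unfolding msum_def
  by (intro eq_matI) (simp_all add: sum.reindex_bij_betw[OF assms, of "\<lambda>x. f x $$ _"])

lemma msg_state_eq_key_state:
  assumes A: "A \<in> carrier_mat P N"
    and \<rho>: "\<forall>x \<in> carrier_vec N. \<rho> x \<in> carrier_mat d d"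
    and m': "m' \<in> carrier_vec P" and s: "s \<in> carrier_vec N"
  shows "msg_state d N A p \<rho> (m', s) =
     complex_of_real (p m' / real (card (fiber N A m'))) \<cdot>\<^sub>m key_state d N A \<rho> (A *\<^sub>v s + m')"
proof -
  have "\<rho> (s + m) \<in> carrier_mat d d" if "m \<in> fiber N A m'" for m
    using that s \<rho> by (auto simp: fiber_def)
  then show ?thesis
    unfolding msg_state_def key_state_def
    by (simp add: msum_smult msum_reindex_bij_betw[OF bij_betw_fiber_translate[OF A s m']])
qed

lemma trace_norm_msg_state_block:
  assumes A: "A \<in> carrier_mat P N"
    and rows_indep: "\<forall>y \<in> carrier_vec P. transpose_mat A *\<^sub>v y = 0\<^sub>v N \<longrightarrow> y = 0\<^sub>v P"
    and \<rho>: "\<forall>x \<in> carrier_vec N. \<rho> x \<in> carrier_mat d d"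
    and p: "p m' \<ge> 0" and m': "m' \<in> carrier_vec P" and s: "s \<in> carrier_vec N"
    and \<rho>\<^sub>E_carrier: "\<rho>\<^sub>E \<in> carrier_mat d d"
  shows "trace_norm (msg_state d N A p \<rho> (m', s) - complex_of_real (p m' / 2 ^ N) \<cdot>\<^sub>m \<rho>\<^sub>E)
    = p m' * 2 ^ P / 2 ^ N *
      trace_norm (key_state d N A \<rho> (A *\<^sub>v s + m') - complex_of_real (1 / 2 ^ P) \<cdot>\<^sub>m \<rho>\<^sub>E)"
proof -
  define c where "c = p m' * 2 ^ P / 2 ^ N"
  define K where "K = key_state d N A \<rho> (A *\<^sub>v s + m')"
  have K: "K \<in> carrier_mat d d" unfolding K_def key_state_def msum_def by simp
  have "msg_state d N A p \<rho> (m', s) = complex_of_real c \<cdot>\<^sub>m K"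
    using msg_state_eq_key_state[OF A \<rho> m' s] real_card_fiber[OF A rows_indep m']
    unfolding c_def K_def by simp
  moreover have "p m' / 2 ^ N = c * (1 / 2 ^ P)" unfolding c_def by simp
  ultimately have "msg_state d N A p \<rho> (m', s) - complex_of_real (p m' / 2 ^ N) \<cdot>\<^sub>m \<rho>\<^sub>E
      = complex_of_real c \<cdot>\<^sub>m (K - complex_of_real (1 / 2 ^ P) \<cdot>\<^sub>m \<rho>\<^sub>E)"
    using K \<rho>\<^sub>E_carrier by (intro eq_matI) (auto simp: algebra_simps)
  moreover have "c \<ge> 0" unfolding c_def using p by simp
  moreover have "K - complex_of_real (1 / 2 ^ P) \<cdot>\<^sub>m \<rho>\<^sub>E \<in> carrier_mat d d"
    using K \<rho>\<^sub>E_carrier by (intro minus_carrier_mat smult_carrier_mat)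
  ultimately show ?thesis
    unfolding c_def[symmetric] K_def[symmetric] by (simp add: trace_norm_smult)
qed

theorem theorem1:
  fixes N N_PA d :: nat and A :: "bit mat" and \<rho> :: "bit vec \<Rightarrow> complex mat"
    and p :: "bit vec \<Rightarrow> real" and \<epsilon> :: real
  assumes "N_PA < N"
    and "A \<in> carrier_mat N_PA N"
    and "\<forall>y \<in> carrier_vec N_PA. transpose_mat A *\<^sub>v y = 0\<^sub>v N \<longrightarrow> y = 0\<^sub>v N_PA"
    and "cq_state d (carrier_vec N) \<rho>"
    and "\<forall>m' \<in> carrier_vec N_PA. 0 \<le> p m'"
    and "(\<Sum>m' \<in> carrier_vec N_PA. p m') = 1"
    and "cq_trace_dist (carrier_vec N_PA) (key_state d N A \<rho>)
           (\<lambda>k. complex_of_real (1 / 2 ^ N_PA) \<cdot>\<^sub>m marg_E d (carrier_vec N) \<rho>) \<le> \<epsilon>"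
  shows "cq_trace_dist (carrier_vec N_PA \<times> carrier_vec N) (msg_state d N A p \<rho>)
           (\<lambda>(m', s). complex_of_real (p m' / 2 ^ N) \<cdot>\<^sub>m marg_E d (carrier_vec N) \<rho>) \<le> \<epsilon>"
proof -
  \<comment> \<open>The distance
    computed below is in fact equal to the key distance.\<close>
  note A = assms(2) and rows_indep = assms(3)
  define \<rho>\<^sub>E where "\<rho>\<^sub>E = marg_E d (carrier_vec N) \<rho>"
  define g where "g k = trace_norm (key_state d N A \<rho> k - complex_of_real (1 / 2 ^ N_PA) \<cdot>\<^sub>m \<rho>\<^sub>E)" for k
  have \<rho>_carrier: "\<forall>x \<in> carrier_vec N. \<rho> x \<in> carrier_mat d d"
    using assms(4) unfolding cq_state_def psd_def by auto
  have \<rho>\<^sub>E_carrier: "\<rho>\<^sub>E \<in> carrier_mat d d" unfolding \<rho>\<^sub>E_def marg_E_def msum_def by simp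
  have block: "trace_norm (msg_state d N A p \<rho> (m', s) - complex_of_real (p m' / 2 ^ N) \<cdot>\<^sub>m \<rho>\<^sub>E)
      = p m' * 2 ^ N_PA / 2 ^ N * g (A *\<^sub>v s + m')"
    if "m' \<in> carrier_vec N_PA" "s \<in> carrier_vec N" for m' s
    unfolding g_def using assms(5) that
    by (intro trace_norm_msg_state_block[OF A rows_indep \<rho>_carrier _ _ _ \<rho>\<^sub>E_carrier]) auto
  have "cq_trace_dist (carrier_vec N_PA \<times> carrier_vec N) (msg_state d N A p \<rho>)
           (\<lambda>(m', s). complex_of_real (p m' / 2 ^ N) \<cdot>\<^sub>m \<rho>\<^sub>E)
      = (1/2) * (\<Sum>m'\<in>carrier_vec N_PA. \<Sum>s\<in>carrier_vec N. p m' * 2 ^ N_PA / 2 ^ N * g (A *\<^sub>v s + m'))"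
    unfolding cq_trace_dist_def sum.cartesian_product' prod.case
    by (intro arg_cong[where f = "(*) _"] sum.cong refl) (simp only: block)
  also have "\<dots> = (1/2) * (\<Sum>m'\<in>carrier_vec N_PA. p m' * 2 ^ N_PA / 2 ^ N * (\<Sum>s\<in>carrier_vec N. g (A *\<^sub>v s + m')))"
    by (simp only: sum_distrib_left)
  also have "\<dots> = (1/2) * (\<Sum>m'\<in>carrier_vec N_PA. p m' * (\<Sum>k\<in>carrier_vec N_PA. g k))"
    by (intro arg_cong[where f = "(*) _"] sum.cong refl) (simp add: sum_mult_mat_vec_shift[OF A rows_indep])
  also have "\<dots> = cq_trace_dist (carrier_vec N_PA) (key_state d N A \<rho>) (\<lambda>k. complex_of_real (1 / 2 ^ N_PA) \<cdot>\<^sub>m \<rho>\<^sub>E)"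
    unfolding cq_trace_dist_def g_def by (simp add: assms(6) flip: sum_distrib_right)
  finally show ?thesis using assms(7) unfolding \<rho>\<^sub>E_def by simp
qed

end
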